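(* Let $1<p<\infty$ and let $\Omega\subset\mathbb{R}^N$ be an open set which is $q_0$-admissible for some $1\le q_0<p$. Then \[ \lim_{q\nearrow p}\lambda_{p,q}(\Omega)=\lambda_p(\Omega),\qquad\text{where }\lambda_p(\Omega)=\inf_{\psi\in C^\infty_0(\Omega)}\Big\{\int_\Omega|\nabla\psi|^p\,dx:\int_\Omega|\psi|^p\,dx=1\Big\}. \]
   Context: For $1\le q<p$, $\lambda_{p,q}(\Omega)=\inf_{\psi\in C^\infty_0(\Omega)}\{\int_\Omega|\nabla\psi|^p\,dx:\int_\Omega|\psi|^q\,dx=1\}$, and $\Omega$ is called $q$-admissible if $\lambda_{p,q}(\Omega)>0$. *)

theory Defs
  imports "HOL-Analysis.Analysis"
begin

definition partial_deriv :: "('a::euclidean_space \<Rightarrow> real) \<Rightarrow> 'a \<Rightarrow> 'a \<Rightarrow> real" where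
  "partial_deriv f b = (\<lambda>x. frechet_derivative f (at x) b)"

fun iter_partial :: "'a::euclidean_space list \<Rightarrow> ('a \<Rightarrow> real) \<Rightarrow> 'a \<Rightarrow> real" where
  "iter_partial [] f = f"
| "iter_partial (b # bs) f = partial_deriv (iter_partial bs f) b"

definition smooth_fun :: "('a::euclidean_space \<Rightarrow> real) \<Rightarrow> bool" where
  "smooth_fun f \<longleftrightarrow> (\<forall>bs. set bs \<subseteq> Basis \<longrightarrow> (\<forall>x. iter_partial bs f differentiable (at x)))"

definition test_fun :: "'a::euclidean_space set \<Rightarrow> ('a \<Rightarrow> real) \<Rightarrow> bool" where
  "test_fun \<Omega> \<psi> \<longleftrightarrow> smooth_fun \<psi> \<and> compact (closure {x. \<psi> x \<noteq> 0})
      \<and> closure {x. \<psi> x \<noteq> 0} \<subseteq> \<Omega>"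

definition grad :: "('a::euclidean_space \<Rightarrow> real) \<Rightarrow> 'a \<Rightarrow> 'a" where
  "grad f x = (\<Sum>b\<in>Basis. partial_deriv f b x *\<^sub>R b)"

text \<open>lambda_{p,q}(Omega) as an extended real (infimum of the empty set is +infinity).\<close>
definition lambda_pq :: "real \<Rightarrow> real \<Rightarrow> 'a::euclidean_space set \<Rightarrow> ereal" where
  "lambda_pq p q \<Omega> = (INF \<psi>\<in>{\<psi>. test_fun \<Omega> \<psi> \<and> (LINT x:\<Omega>|lborel. \<bar>\<psi> x\<bar> powr q) = 1}.
       ereal (LINT x:\<Omega>|lborel. norm (grad \<psi> x) powr p))"

definition q_admissible :: "real \<Rightarrow> real \<Rightarrow> 'a::euclidean_space set \<Rightarrow> bool" where
  "q_admissible p q \<Omega> \<longleftrightarrow> lambda_pq p q \<Omega> > 0"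

end

(*
  By homogeneity, lambda_pq p r Omega is the infimum over nonzero test functions psi of the
  Rayleigh quotient (int |grad psi|^p) / (int |psi|^r)^(p/r).

  Lower bound: for q0 < q < p, Lyapunov's interpolation inequality bounds int |psi|^q by
  (int |psi|^q0)^l (int |psi|^p)^(1-l), which makes the quotient at q dominate a weighted
  geometric mean of the quotients at q0 and p, with weight mu(q) on q0 tending to 0.  Hence
  lambda_pq p q >= lambda_pq p q0 ^ mu(q) * lambda_pq p p ^ (1 - mu(q)) -> lambda_pq p p,
  and this is where q0-admissibility is needed.

  Upper bound: for a fixed psi, interpolating the exponent p between q and p + 1 bounds
  int |psi|^q from below by a quantity tending to int |psi|^p as q -> p, so eventually
  lambda_pq p q is below any number exceeding the quotient of psi at p.
*)
theory Submission
  imports Defs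
begin

lemma test_fun_differentiable:
  assumes "test_fun \<Omega> \<psi>"
  shows "\<psi> differentiable (at x)"
  using assms unfolding test_fun_def smooth_fun_def
  by (metis empty_subsetI iter_partial.simps(1) list.set(1))

lemma test_fun_continuous_on:
  assumes "test_fun \<Omega> \<psi>"
  shows "continuous_on S \<psi>"
  using test_fun_differentiable[OF assms] differentiable_imp_continuous_within
    continuous_at_imp_continuous_on
  by blast

lemma test_fun_eq_0_outside:
  assumes "test_fun \<Omega> \<psi>" "x \<notin> \<Omega>"
  shows "\<psi> x = 0"
  using assms closure_subset[of "{x. \<psi> x \<noteq> 0}"] unfolding test_fun_def by blast

lemma integrable_abs_powr_test_fun:
  fixes \<psi> :: "'a::euclidean_space \<Rightarrow> real"
  assumes "test_fun \<Omega> \<psi>" "0 < r"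
  shows "integrable lborel (\<lambda>x. \<bar>\<psi> x\<bar> powr r)"
proof -
  let ?K = "closure {x. \<psi> x \<noteq> 0}"
  have "continuous_on ?K \<psi>"
    using assms(1) by (rule test_fun_continuous_on)
  then have "continuous_on ?K (\<lambda>x. \<bar>\<psi> x\<bar> powr r)"
    using assms(2) by (intro continuous_on_powr' continuous_on_rabs continuous_on_const) auto
  then have "integrable lborel (\<lambda>x. indicator ?K x *\<^sub>R \<bar>\<psi> x\<bar> powr r)"
    using assms(1) unfolding test_fun_def by (intro borel_integrable_compact) auto
  moreover have "(\<lambda>x. indicator ?K x *\<^sub>R \<bar>\<psi> x\<bar> powr r) = (\<lambda>x. \<bar>\<psi> x\<bar> powr r)"
    using closure_subset[of "{x. \<psi> x \<noteq> 0}"] by (intro ext) (auto simp: indicator_def)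
  ultimately show ?thesis
    by (simp only:)
qed

lemma set_integral_abs_powr_test_fun:
  fixes \<psi> :: "'a::euclidean_space \<Rightarrow> real"
  assumes "test_fun \<Omega> \<psi>"
  shows "(LINT x:\<Omega>|lborel. \<bar>\<psi> x\<bar> powr r) = (\<integral>x. \<bar>\<psi> x\<bar> powr r \<partial>lborel)"
  unfolding set_lebesgue_integral_def
  using test_fun_eq_0_outside[OF assms]
  by (intro Bochner_Integration.integral_cong) (auto simp: indicator_def)

lemma iter_partial_cmult:
  fixes f :: "'a::euclidean_space \<Rightarrow> real"
  assumes "smooth_fun f" "set bs \<subseteq> Basis"
  shows "iter_partial bs (\<lambda>x. c * f x) = (\<lambda>x. c * iter_partial bs f x)"
  using assms(2)
proof (induction bs)
  case Nil
  then show ?case by simp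
next
  case (Cons b bs)
  show ?case
  proof
    fix x
    let ?g = "iter_partial bs f"
    have "?g differentiable (at x)"
      using assms(1) Cons.prems unfolding smooth_fun_def by simp
    then have "((\<lambda>x. c * ?g x) has_derivative (\<lambda>h. c * frechet_derivative ?g (at x) h)) (at x)"
      by (intro has_derivative_mult_right) (simp add: frechet_derivative_works)
    then have "frechet_derivative (\<lambda>x. c * ?g x) (at x) = (\<lambda>h. c * frechet_derivative ?g (at x) h)"
      by (rule frechet_derivative_at[symmetric])
    then show "iter_partial (b # bs) (\<lambda>x. c * f x) x = c * iter_partial (b # bs) f x"
      using Cons by (simp add: partial_deriv_def)
  qed
qed

lemma smooth_fun_cmult:
  fixes f :: "'a::euclidean_space \<Rightarrow> real"
  assumes "smooth_fun f"
  shows "smooth_fun (\<lambda>x. c * f x)"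
  unfolding smooth_fun_def
proof (intro allI impI)
  fix bs x assume bs: "set bs \<subseteq> (Basis :: 'a set)"
  then have "iter_partial bs f differentiable (at x)"
    using assms unfolding smooth_fun_def by blast
  then show "iter_partial bs (\<lambda>x. c * f x) differentiable (at x)"
    unfolding iter_partial_cmult[OF assms bs] by simp
qed

lemma test_fun_cmult:
  assumes "test_fun \<Omega> \<psi>" "c \<noteq> 0"
  shows "test_fun \<Omega> (\<lambda>x. c * \<psi> x)"
proof -
  have "{x. c * \<psi> x \<noteq> 0} = {x. \<psi> x \<noteq> 0}"
    using assms(2) by auto
  moreover have "smooth_fun (\<lambda>x. c * \<psi> x)"
    using assms(1) smooth_fun_cmult unfolding test_fun_def by blast
  ultimately show ?thesis
    using assms(1) unfolding test_fun_def by simp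
qed

lemma grad_cmult:
  fixes \<psi> :: "'a::euclidean_space \<Rightarrow> real"
  assumes "smooth_fun \<psi>"
  shows "grad (\<lambda>x. c * \<psi> x) x = c *\<^sub>R grad \<psi> x"
proof -
  have "partial_deriv (\<lambda>x. c * \<psi> x) b = (\<lambda>x. c * partial_deriv \<psi> b x)" if "b \<in> Basis" for b
    using iter_partial_cmult[OF assms, of "[b]" c] that by simp
  then show ?thesis
    unfolding grad_def by (simp add: scaleR_sum_right)
qed

definition powr_integral :: "real \<Rightarrow> ('a::euclidean_space \<Rightarrow> real) \<Rightarrow> real" where
  "powr_integral r \<psi> = (\<integral>x. \<bar>\<psi> x\<bar> powr r \<partial>lborel)"

definition grad_energy :: "real \<Rightarrow> 'a::euclidean_space set \<Rightarrow> ('a \<Rightarrow> real) \<Rightarrow> real" where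
  "grad_energy p \<Omega> \<psi> = (LINT x:\<Omega>|lborel. norm (grad \<psi> x) powr p)"

definition rayleigh_quotient :: "real \<Rightarrow> real \<Rightarrow> 'a::euclidean_space set \<Rightarrow> ('a \<Rightarrow> real) \<Rightarrow> real" where
  "rayleigh_quotient p r \<Omega> \<psi> = grad_energy p \<Omega> \<psi> / powr_integral r \<psi> powr (p / r)"

definition nontrivial_test_funs :: "'a::euclidean_space set \<Rightarrow> ('a \<Rightarrow> real) set" where
  "nontrivial_test_funs \<Omega> = {\<psi>. test_fun \<Omega> \<psi> \<and> \<not> (AE x in lborel. \<psi> x = 0)}"

lemma powr_integral_nonneg: "0 \<le> powr_integral r \<psi>"
  unfolding powr_integral_def by (rule integral_nonneg_AE) auto

lemma grad_energy_nonneg: "0 \<le> grad_energy p \<Omega> \<psi>"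
  unfolding grad_energy_def set_lebesgue_integral_def
  by (rule integral_nonneg_AE) (auto simp: indicator_def)

lemma powr_integral_cmult:
  assumes "0 < c"
  shows "powr_integral r (\<lambda>x. c * \<psi> x) = c powr r * powr_integral r \<psi>"
  using assms unfolding powr_integral_def by (simp add: abs_mult powr_mult)

lemma grad_energy_cmult:
  assumes "test_fun \<Omega> \<psi>" "0 < c"
  shows "grad_energy p \<Omega> (\<lambda>x. c * \<psi> x) = c powr p * grad_energy p \<Omega> \<psi>"
  using assms unfolding grad_energy_def test_fun_def
  by (simp add: grad_cmult powr_mult)

lemma rayleigh_quotient_cmult:
  assumes "test_fun \<Omega> \<psi>" "0 < c" "r \<noteq> 0"
  shows "rayleigh_quotient p r \<Omega> (\<lambda>x. c * \<psi> x) = rayleigh_quotient p r \<Omega> \<psi>"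
proof -
  have "(c powr r * powr_integral r \<psi>) powr (p / r) = c powr p * powr_integral r \<psi> powr (p / r)"
    using assms powr_integral_nonneg[of r \<psi>] by (simp add: powr_mult powr_powr)
  then show ?thesis
    using assms unfolding rayleigh_quotient_def
    by (simp add: powr_integral_cmult grad_energy_cmult)
qed

lemma powr_integral_pos_iff:
  assumes "test_fun \<Omega> \<psi>" "0 < r"
  shows "0 < powr_integral r \<psi> \<longleftrightarrow> \<not> (AE x in lborel. \<psi> x = 0)"
proof -
  have "powr_integral r \<psi> = 0 \<longleftrightarrow> (AE x in lborel. \<bar>\<psi> x\<bar> powr r = 0)"
    unfolding powr_integral_def
    by (rule integral_nonneg_eq_0_iff_AE[OF integrable_abs_powr_test_fun[OF assms]]) auto
  then show ?thesis
    using powr_integral_nonneg[of r \<psi>] by auto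
qed

lemma powr_integral_pos:
  assumes "\<psi> \<in> nontrivial_test_funs \<Omega>" "0 < r"
  shows "0 < powr_integral r \<psi>"
  using assms powr_integral_pos_iff unfolding nontrivial_test_funs_def by blast

lemma normalize_test_fun:
  assumes "\<psi> \<in> nontrivial_test_funs \<Omega>" "0 < r"
  obtains \<phi> where "test_fun \<Omega> \<phi>" "powr_integral r \<phi> = 1"
    "rayleigh_quotient p r \<Omega> \<phi> = rayleigh_quotient p r \<Omega> \<psi>"
proof -
  have \<psi>: "test_fun \<Omega> \<psi>"
    using assms(1) unfolding nontrivial_test_funs_def by blast
  have N: "0 < powr_integral r \<psi>"
    using powr_integral_pos[OF assms] .
  define c where "c = powr_integral r \<psi> powr (- 1 / r)"
  have c: "0 < c"
    using N unfolding c_def by simp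
  have "powr_integral r (\<lambda>x. c * \<psi> x) = powr_integral r \<psi> powr (- 1) * powr_integral r \<psi>"
    using assms(2) c N by (simp add: powr_integral_cmult c_def powr_powr)
  also have "\<dots> = 1"
    using N by (simp add: powr_minus_divide)
  finally have "powr_integral r (\<lambda>x. c * \<psi> x) = 1" .
  moreover have "test_fun \<Omega> (\<lambda>x. c * \<psi> x)"
    using test_fun_cmult[OF \<psi>] c by simp
  moreover have "rayleigh_quotient p r \<Omega> (\<lambda>x. c * \<psi> x) = rayleigh_quotient p r \<Omega> \<psi>"
    using rayleigh_quotient_cmult[OF \<psi> c] assms(2) by simp
  ultimately show ?thesis
    using that by blast
qed

lemma lambda_pq_eq_INF_rayleigh_quotient:
  fixes \<Omega> :: "'a::euclidean_space set"
  assumes "0 < r"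
  shows "lambda_pq p r \<Omega> = (INF \<psi>\<in>nontrivial_test_funs \<Omega>. ereal (rayleigh_quotient p r \<Omega> \<psi>))"
  unfolding lambda_pq_def
proof (rule antisym)
  let ?normalized = "{\<psi>. test_fun \<Omega> \<psi> \<and> (LINT x:\<Omega>|lborel. \<bar>\<psi> x\<bar> powr r) = 1}"
  have normalized_iff: "\<psi> \<in> ?normalized \<longleftrightarrow> test_fun \<Omega> \<psi> \<and> powr_integral r \<psi> = 1" for \<psi>
    using set_integral_abs_powr_test_fun[of \<Omega> \<psi> r] unfolding powr_integral_def by auto
  show "(INF \<psi>\<in>?normalized. ereal (LINT x:\<Omega>|lborel. norm (grad \<psi> x) powr p))
      \<le> (INF \<psi>\<in>nontrivial_test_funs \<Omega>. ereal (rayleigh_quotient p r \<Omega> \<psi>))"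
  proof (rule INF_greatest)
    fix \<psi> assume "\<psi> \<in> nontrivial_test_funs \<Omega>"
    then obtain \<phi> where "test_fun \<Omega> \<phi>" "powr_integral r \<phi> = 1"
      "rayleigh_quotient p r \<Omega> \<phi> = rayleigh_quotient p r \<Omega> \<psi>"
      using normalize_test_fun assms by blast
    then show "(INF \<psi>\<in>?normalized. ereal (LINT x:\<Omega>|lborel. norm (grad \<psi> x) powr p))
        \<le> ereal (rayleigh_quotient p r \<Omega> \<psi>)"
      using normalized_iff unfolding rayleigh_quotient_def grad_energy_def
      by (auto intro!: INF_lower2)
  qed
  show "(INF \<psi>\<in>nontrivial_test_funs \<Omega>. ereal (rayleigh_quotient p r \<Omega> \<psi>))
      \<le> (INF \<psi>\<in>?normalized. ereal (LINT x:\<Omega>|lborel. norm (grad \<psi> x) powr p))"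
  proof (rule INF_greatest)
    fix \<psi> assume "\<psi> \<in> ?normalized"
    then have \<psi>: "test_fun \<Omega> \<psi>" and N: "powr_integral r \<psi> = 1"
      using normalized_iff by auto
    then have "\<psi> \<in> nontrivial_test_funs \<Omega>"
      using powr_integral_pos_iff[OF \<psi> assms] unfolding nontrivial_test_funs_def by simp
    with N show "(INF \<psi>\<in>nontrivial_test_funs \<Omega>. ereal (rayleigh_quotient p r \<Omega> \<psi>))
        \<le> ereal (LINT x:\<Omega>|lborel. norm (grad \<psi> x) powr p)"
      unfolding rayleigh_quotient_def grad_energy_def by (auto intro!: INF_lower2)
  qed
qed

lemma lambda_pq_le_rayleigh_quotient:
  assumes "\<psi> \<in> nontrivial_test_funs \<Omega>" "0 < r"
  shows "lambda_pq p r \<Omega> \<le> ereal (rayleigh_quotient p r \<Omega> \<psi>)"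
  unfolding lambda_pq_eq_INF_rayleigh_quotient[OF assms(2)] using assms(1) by (rule INF_lower)

lemma lambda_pq_nonneg: "0 \<le> lambda_pq p r \<Omega>"
  unfolding lambda_pq_def set_lebesgue_integral_def
  by (auto intro!: INF_greatest integral_nonneg_AE simp: indicator_def)

lemma integral_abs_powr_interpolation:
  fixes f :: "'b \<Rightarrow> real"
  assumes "integrable M (\<lambda>x. \<bar>f x\<bar> powr s)" "integrable M (\<lambda>x. \<bar>f x\<bar> powr t)"
    and "integrable M (\<lambda>x. \<bar>f x\<bar> powr (l * s + (1 - l) * t))"
    and "0 < l" "l < 1"
    and "0 < (\<integral>x. \<bar>f x\<bar> powr s \<partial>M)" and "0 < (\<integral>x. \<bar>f x\<bar> powr t \<partial>M)"
  shows "(\<integral>x. \<bar>f x\<bar> powr (l * s + (1 - l) * t) \<partial>M)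
    \<le> (\<integral>x. \<bar>f x\<bar> powr s \<partial>M) powr l * (\<integral>x. \<bar>f x\<bar> powr t \<partial>M) powr (1 - l)"
proof -
  define A where "A = (\<integral>x. \<bar>f x\<bar> powr s \<partial>M)"
  define B where "B = (\<integral>x. \<bar>f x\<bar> powr t \<partial>M)"
  define c where "c = l * s + (1 - l) * t"
  define D where "D = A powr l * B powr (1 - l)"
  have A: "0 < A" and B: "0 < B"
    using assms unfolding A_def B_def by auto
  then have D: "0 < D"
    unfolding D_def by simp
  have pointwise: "\<bar>f x\<bar> powr c / D \<le> l * (\<bar>f x\<bar> powr s / A) + (1 - l) * (\<bar>f x\<bar> powr t / B)" for x
  proof (cases "f x = 0")
    case True
    \<comment> \<open>\<open>0 powr c = 0\<close> for every \<open>c\<close>, so no sign condition on the exponents is needed\<close>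
    then show ?thesis
      using assms A B by simp
  next
    case False
    have "(\<bar>f x\<bar> powr s / A) powr l * (\<bar>f x\<bar> powr t / B) powr (1 - l)
        \<le> l * (\<bar>f x\<bar> powr s / A) + (1 - l) * (\<bar>f x\<bar> powr t / B)"
      using assms A B False by (intro Youngs_inequality_0) auto
    moreover have "(\<bar>f x\<bar> powr s / A) powr l * (\<bar>f x\<bar> powr t / B) powr (1 - l) = \<bar>f x\<bar> powr c / D"
      using A B unfolding D_def c_def by (simp add: powr_divide powr_powr powr_add mult.commute)
    ultimately show ?thesis
      by simp
  qed
  have "(\<integral>x. \<bar>f x\<bar> powr c \<partial>M) / D = (\<integral>x. \<bar>f x\<bar> powr c / D \<partial>M)"
    by simp
  also have "\<dots> \<le> (\<integral>x. l * (\<bar>f x\<bar> powr s / A) + (1 - l) * (\<bar>f x\<bar> powr t / B) \<partial>M)"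
    using assms pointwise unfolding c_def by (intro integral_mono) auto
  also have "\<dots> = l * (A / A) + (1 - l) * (B / B)"
    using assms unfolding A_def B_def by simp
  also have "\<dots> = 1"
    using A B by simp
  finally show ?thesis
    using D unfolding D_def A_def B_def c_def by (simp add: divide_le_eq)
qed

lemma powr_integral_interpolation:
  assumes "\<psi> \<in> nontrivial_test_funs \<Omega>" "0 < s" "0 < t" "0 < l" "l < 1"
  shows "powr_integral (l * s + (1 - l) * t) \<psi> \<le> powr_integral s \<psi> powr l * powr_integral t \<psi> powr (1 - l)"
proof -
  have "0 < l * s + (1 - l) * t"
    using assms by (simp add: add_pos_pos)
  then show ?thesis
    using assms powr_integral_pos[OF assms(1)] unfolding powr_integral_def nontrivial_test_funs_def
    by (intro integral_abs_powr_interpolation integrable_abs_powr_test_fun[of \<Omega>]) auto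
qed

lemma interpolated_quotient_ge_geometric_mean:
  fixes G N0 N1 Nq l p q0 q1 :: real
  assumes "0 < q0" "0 < q1" "0 < l" "l < 1" "0 \<le> p"
    and "0 < N0" "0 < N1" "0 < Nq" "0 \<le> G"
    and "Nq \<le> N0 powr l * N1 powr (1 - l)"
  defines "q \<equiv> l * q0 + (1 - l) * q1"
  shows "(G / N0 powr (p / q0)) powr (l * q0 / q) * (G / N1 powr (p / q1)) powr (1 - l * q0 / q)
    \<le> G / Nq powr (p / q)"
proof -
  define m where "m = l * q0 / q"
  have q: "0 < q"
    using assms unfolding q_def by (simp add: add_pos_pos)
  have exponent0: "p / q0 * m = l * (p / q)"
    using assms unfolding m_def by simp
  have "1 - m = (q - l * q0) / q"
    using q unfolding m_def by (simp add: field_simps)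
  also have "q - l * q0 = (1 - l) * q1"
    unfolding q_def by simp
  finally have exponent1: "p / q1 * (1 - m) = (1 - l) * (p / q)"
    using assms by simp
  have "(G / N0 powr (p / q0)) powr m * (G / N1 powr (p / q1)) powr (1 - m)
      = (G powr m * G powr (1 - m)) / (N0 powr (p / q0 * m) * N1 powr (p / q1 * (1 - m)))"
    using assms by (simp add: powr_divide powr_powr)
  also have "G powr m * G powr (1 - m) = G"
    using assms by (simp add: powr_add[symmetric])
  also have "N0 powr (p / q0 * m) * N1 powr (p / q1 * (1 - m)) = (N0 powr l * N1 powr (1 - l)) powr (p / q)"
    using assms unfolding exponent0 exponent1 by (simp add: powr_mult powr_powr)
  also have "G / (N0 powr l * N1 powr (1 - l)) powr (p / q) \<le> G / Nq powr (p / q)"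
    using assms q by (intro divide_left_mono powr_mono2 mult_pos_pos) auto
  finally show ?thesis
    unfolding m_def .
qed

lemma geometric_mean_le_lambda_pq:
  assumes "0 < q0" "q0 < q" "q < p"
    and "0 < a" "ereal a \<le> lambda_pq p q0 \<Omega>" and "0 \<le> b" "ereal b \<le> lambda_pq p p \<Omega>"
  defines "\<mu> \<equiv> (p - q) / (p - q0) * q0 / q"
  shows "ereal (a powr \<mu> * b powr (1 - \<mu>)) \<le> lambda_pq p q \<Omega>"
proof -
  define l where "l = (p - q) / (p - q0)"
  have q: "0 < q" and p: "0 < p"
    using assms(1-3) by simp_all
  have l: "0 < l" "l < 1"
    using assms(1-3) unfolding l_def by (simp_all add: divide_less_eq)
  have "l * q0 + (1 - l) * p = p - (p - q0) * l"
    by (simp add: algebra_simps)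
  also have "(p - q0) * l = p - q"
    using assms(2,3) unfolding l_def by simp
  finally have q_eq: "l * q0 + (1 - l) * p = q"
    by simp
  have "l * q0 < q0"
    using l assms(1) by simp
  then have "l * q0 < q"
    using assms(2) by linarith
  moreover have \<mu>_eq: "\<mu> = l * q0 / q"
    unfolding \<mu>_def l_def by simp
  ultimately have \<mu>: "0 < \<mu>" "\<mu> < 1"
    using l assms(1) q by (simp_all add: divide_less_eq)
  show ?thesis
    unfolding lambda_pq_eq_INF_rayleigh_quotient[OF q]
  proof (rule INF_greatest)
    fix \<psi> assume \<psi>: "\<psi> \<in> nontrivial_test_funs \<Omega>"
    note N = powr_integral_pos[OF \<psi>]
    have "ereal a \<le> rayleigh_quotient p q0 \<Omega> \<psi>"
      using order_trans[OF assms(5) lambda_pq_le_rayleigh_quotient[OF \<psi> assms(1)]] .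
    moreover have "ereal b \<le> rayleigh_quotient p p \<Omega> \<psi>"
      using order_trans[OF assms(7) lambda_pq_le_rayleigh_quotient[OF \<psi> p]] .
    ultimately have "a powr \<mu> * b powr (1 - \<mu>)
        \<le> rayleigh_quotient p q0 \<Omega> \<psi> powr \<mu> * rayleigh_quotient p p \<Omega> \<psi> powr (1 - \<mu>)"
      using assms(4,6) \<mu> by (intro mult_mono powr_mono2) auto
    also have "\<dots> \<le> rayleigh_quotient p q \<Omega> \<psi>"
    proof -
      have "powr_integral q \<psi> \<le> powr_integral q0 \<psi> powr l * powr_integral p \<psi> powr (1 - l)"
        using powr_integral_interpolation[OF \<psi> assms(1) p l] unfolding q_eq .
      from interpolated_quotient_ge_geometric_mean[OF assms(1) p l less_imp_le[OF p]
          N[OF assms(1)] N[OF p] N[OF q] grad_energy_nonneg this]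
      show ?thesis
        unfolding rayleigh_quotient_def \<mu>_eq q_eq .
    qed
    finally show "ereal (a powr \<mu> * b powr (1 - \<mu>)) \<le> ereal (rayleigh_quotient p q \<Omega> \<psi>)"
      by simp
  qed
qed

lemma eventually_less_lambda_pq:
  assumes "0 < q0" "q0 < p" "0 < lambda_pq p q0 \<Omega>" "y < lambda_pq p p \<Omega>"
  shows "eventually (\<lambda>q. y < lambda_pq p q \<Omega>) (at_left p)"
proof -
  obtain a where a: "0 < a" "ereal a < lambda_pq p q0 \<Omega>"
    using ereal_dense2[OF assms(3)] by auto
  obtain b where b: "y < ereal b" "ereal b < lambda_pq p p \<Omega>"
    using ereal_dense2[OF assms(4)] by blast
  show ?thesis
  proof (cases "0 < b")
    case False
    then have "y < 0"
      using b(1) by (simp add: less_le_trans)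
    then have "y < lambda_pq p q \<Omega>" for q
      using lambda_pq_nonneg less_le_trans by blast
    then show ?thesis
      by simp
  next
    case True
    define \<mu> where "\<mu> q = (p - q) / (p - q0) * q0 / q" for q
    have "(\<mu> \<longlongrightarrow> (p - p) / (p - q0) * q0 / p) (at_left p)"
      unfolding \<mu>_def using assms by (intro tendsto_intros) auto
    then have "((\<lambda>q. a powr \<mu> q * b powr (1 - \<mu> q)) \<longlongrightarrow> a powr 0 * b powr (1 - 0)) (at_left p)"
      using a True by (intro tendsto_intros) auto
    then have "eventually (\<lambda>q. y < ereal (a powr \<mu> q * b powr (1 - \<mu> q))) (at_left p)"
      using a(1) b(1) True by (intro order_tendstoD(1)[OF tendsto_ereal]) auto
    moreover have "eventually (\<lambda>q. q0 < q \<and> q < p) (at_left p)"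
      using eventually_at_left_real[OF assms(2)] by eventually_elim simp
    ultimately show ?thesis
    proof eventually_elim
      case (elim q)
      have "ereal (a powr \<mu> q * b powr (1 - \<mu> q)) \<le> lambda_pq p q \<Omega>"
        unfolding \<mu>_def using elim assms a b True by (intro geometric_mean_le_lambda_pq) auto
      then show ?case
        using elim by (blast intro: less_le_trans)
    qed
  qed
qed

lemma powr_integral_lower_bound:
  assumes "\<psi> \<in> nontrivial_test_funs \<Omega>" "0 < q" "q < p"
  shows "(powr_integral p \<psi> / powr_integral (p + 1) \<psi> powr (1 - 1 / (p + 1 - q))) powr (p + 1 - q)
    \<le> powr_integral q \<psi>"
proof -
  define l where "l = 1 / (p + 1 - q)"
  have l: "0 < l" "l < 1"
    using assms(2,3) unfolding l_def by (simp_all add: divide_less_eq)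
  have "l * q + (1 - l) * (p + 1) = p + 1 - l * (p + 1 - q)"
    by (simp add: algebra_simps)
  also have "l * (p + 1 - q) = 1"
    using assms(3) unfolding l_def by simp
  finally have p_eq: "l * q + (1 - l) * (p + 1) = p"
    by simp
  have "powr_integral p \<psi> \<le> powr_integral q \<psi> powr l * powr_integral (p + 1) \<psi> powr (1 - l)"
    using powr_integral_interpolation[where t = "p + 1", OF assms(1,2) _ l] assms(2,3)
    unfolding p_eq by simp
  then have "powr_integral p \<psi> / powr_integral (p + 1) \<psi> powr (1 - l) \<le> powr_integral q \<psi> powr l"
    using powr_integral_pos[OF assms(1), of "p + 1"] assms(2,3) by (simp add: divide_le_eq)
  then have "(powr_integral p \<psi> / powr_integral (p + 1) \<psi> powr (1 - l)) powr (1 / l)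
      \<le> (powr_integral q \<psi> powr l) powr (1 / l)"
    using l powr_integral_nonneg[of p \<psi>] powr_integral_nonneg[of "p + 1" \<psi>]
    by (intro powr_mono2) auto
  also have "\<dots> = powr_integral q \<psi>"
    using l powr_integral_nonneg[of q \<psi>] by (simp add: powr_powr)
  finally show ?thesis
    unfolding l_def by simp
qed

lemma eventually_lambda_pq_less:
  assumes "0 < p" "\<psi> \<in> nontrivial_test_funs \<Omega>" "ereal (rayleigh_quotient p p \<Omega> \<psi>) < y"
  shows "eventually (\<lambda>q. lambda_pq p q \<Omega> < y) (at_left p)"
proof -
  define B where
    "B q = (powr_integral p \<psi> / powr_integral (p + 1) \<psi> powr (1 - 1 / (p + 1 - q))) powr (p + 1 - q)"
    for q
  have Np: "0 < powr_integral p \<psi>" and Ns: "0 < powr_integral (p + 1) \<psi>"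
    using powr_integral_pos[OF assms(2)] assms(1) by simp_all
  then have B: "0 < B q" for q
    unfolding B_def by simp
  have "(B \<longlongrightarrow> (powr_integral p \<psi> / powr_integral (p + 1) \<psi> powr (1 - 1 / (p + 1 - p))) powr (p + 1 - p))
      (at_left p)"
    unfolding B_def using Np Ns by (intro tendsto_intros) auto
  then have "(B \<longlongrightarrow> powr_integral p \<psi>) (at_left p)"
    using Np Ns by simp
  then have "((\<lambda>q. grad_energy p \<Omega> \<psi> / B q powr (p / q)) \<longlongrightarrow> rayleigh_quotient p p \<Omega> \<psi>) (at_left p)"
    unfolding rayleigh_quotient_def using Np assms(1) by (intro tendsto_intros) auto
  then have "eventually (\<lambda>q. ereal (grad_energy p \<Omega> \<psi> / B q powr (p / q)) < y) (at_left p)"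
    using assms(3) by (intro order_tendstoD(2)[OF tendsto_ereal])
  moreover have "eventually (\<lambda>q. 0 < q \<and> q < p) (at_left p)"
    using eventually_at_left_real[OF assms(1)] by eventually_elim simp
  ultimately show ?thesis
  proof eventually_elim
    case (elim q)
    have "lambda_pq p q \<Omega> \<le> ereal (rayleigh_quotient p q \<Omega> \<psi>)"
      using elim by (intro lambda_pq_le_rayleigh_quotient[OF assms(2)]) auto
    also have "rayleigh_quotient p q \<Omega> \<psi> \<le> grad_energy p \<Omega> \<psi> / B q powr (p / q)"
    proof -
      have "B q \<le> powr_integral q \<psi>"
        unfolding B_def using elim by (intro powr_integral_lower_bound[OF assms(2)]) auto
      then show ?thesis
        unfolding rayleigh_quotient_def using B[of q] elim assms(1) powr_integral_pos[OF assms(2), of q]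
        by (intro divide_left_mono powr_mono2 grad_energy_nonneg mult_pos_pos) auto
    qed
    also have "ereal (grad_energy p \<Omega> \<psi> / B q powr (p / q)) < y"
      using elim by simp
    finally show ?case
      by simp
  qed
qed

theorem proposition2p3:
  fixes \<Omega> :: "'a::euclidean_space set" and p q0 :: real
  assumes "1 < p" and "open \<Omega>"
    and "1 \<le> q0" and "q0 < p" and "q_admissible p q0 \<Omega>"
  shows "((\<lambda>q. lambda_pq p q \<Omega>) \<longlongrightarrow> lambda_pq p p \<Omega>) (at_left p)"
proof (rule order_tendstoI)
  fix y assume "y < lambda_pq p p \<Omega>"
  then show "eventually (\<lambda>q. y < lambda_pq p q \<Omega>) (at_left p)"
    using assms unfolding q_admissible_def by (intro eventually_less_lambda_pq) auto
next
  fix y assume "lambda_pq p p \<Omega> < y"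
  then obtain \<psi> where "\<psi> \<in> nontrivial_test_funs \<Omega>" "ereal (rayleigh_quotient p p \<Omega> \<psi>) < y"
    using assms(1) by (auto simp: lambda_pq_eq_INF_rayleigh_quotient INF_less_iff)
  then show "eventually (\<lambda>q. lambda_pq p q \<Omega> < y) (at_left p)"
    using assms(1) by (intro eventually_lambda_pq_less) auto
qed

end
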